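(* Let $A$ be a finite nonempty subset of $(0,\infty)$ and let $g:A\to[0,\infty)$. Let $f=g\circ g$ be the function defined on $A_2=\{a\in A: g(a)\in A\}$ by $f(a)=g(g(a))$, and let $h_{g\circ g}=\{(f(a)/a,\,a): a\in A_2\}$. Then $h_{g\circ g}=g$ (i.e. $\{(g(g(a))/a,a):a\in A_2\}=\{(a,g(a)):a\in A\}$) if and only if $A$ has exactly one element and $f=\{(1,1)\}$ (equivalently $A=\{1\}$ and $g(1)=1$).
   Context: For a function $f$ on a finite set $B\subset(0,\infty)$, the Hirsch function $h_f$ is defined exactly at the points $f(b)/b$, $b\in B$, and maps $f(b)/b$ to $b$. Equality of functions means same domain and same values. *)

theory Defs
  imports Main "HOL.Real"
begin

definition graph_on :: "real set \<Rightarrow> (real \<Rightarrow> real) \<Rightarrow> (real \<times> real) set" where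
  "graph_on B f = {(b, f b) | b. b \<in> B}"

definition hirsch :: "real set \<Rightarrow> (real \<Rightarrow> real) \<Rightarrow> (real \<times> real) set" where
  "hirsch B f = {(f b / b, b) | b. b \<in> B}"

definition comp_dom :: "real set \<Rightarrow> (real \<Rightarrow> real) \<Rightarrow> real set" where
  "comp_dom A g = {a \<in> A. g a \<in> A}"

end

theory Submission
  imports Defs Complex_Main
begin

text \<open>If the Hirsch function of \<open>g \<circ> g\<close> is \<open>g\<close>, every pair \<open>(a, g a)\<close> has the form
  \<open>(g (g b) / b, b)\<close>; hence \<open>g\<close> permutes \<open>A\<close> and \<open>g (g (g a)) = a * g a\<close>. For \<open>u = ln\<close>
  this is the linear recurrence \<open>u (g (g (g a))) = u a + u (g a)\<close>, along which the quadratic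
  form \<open>-2x\<^sup>2 - y\<^sup>2 - z\<^sup>2 + 2xz + 2yz\<close> in \<open>(x, y, z) = (u a, u (g a), u (g (g a)))\<close> grows
  by exactly \<open>(u a)\<^sup>2\<close> per step. Summed over the permutation \<open>g\<close> of \<open>A\<close> the increments
  cancel, so \<open>u = 0\<close> on \<open>A\<close>, i.e. \<open>A = {1}\<close>.\<close>

lemma sum_diff_image_self_eq_0:
  assumes "finite S" and "\<phi> ` S = S"
  shows "(\<Sum>a\<in>S. V (\<phi> a) - V a) = (0 :: 'b :: ab_group_add)"
proof -
  have "inj_on \<phi> S"
    using assms by (simp add: eq_card_imp_inj_on)
  then have "sum (V \<circ> \<phi>) S = sum V S"
    using sum.reindex[of \<phi> S V] assms(2) by simp
  then show ?thesis
    by (simp add: sum_subtractf)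
qed

lemma third_iterate_recurrence_imp_zero:
  fixes u :: "'a \<Rightarrow> real"
  assumes "finite S" and "\<phi> ` S = S"
    and rec: "\<And>a. a \<in> S \<Longrightarrow> u (\<phi> (\<phi> (\<phi> a))) = u a + u (\<phi> a)"
  shows "\<forall>a\<in>S. u a = 0"
proof -
  define Q :: "real \<Rightarrow> real \<Rightarrow> real \<Rightarrow> real" where
    "Q = (\<lambda>x y z. - 2 * x\<^sup>2 - y\<^sup>2 - z\<^sup>2 + 2 * x * z + 2 * y * z)"
  define V where "V = (\<lambda>a. Q (u a) (u (\<phi> a)) (u (\<phi> (\<phi> a))))"
  have increment: "V (\<phi> a) - V a = (u a)\<^sup>2" if "a \<in> S" for a
    unfolding V_def Q_def using rec[OF that] by (simp add: power2_eq_square algebra_simps)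
  have "(\<Sum>a\<in>S. (u a)\<^sup>2) = 0"
    using sum_diff_image_self_eq_0[OF assms(1,2), of V] increment by simp
  then show ?thesis
    using assms(1) by (simp add: sum_nonneg_eq_0_iff)
qed

lemma hirsch_comp_eq_graphD:
  assumes "hirsch (comp_dom A g) (g \<circ> g) = graph_on A g" and "a \<in> A"
  shows "g a \<in> A" and "a = g (g (g a)) / g a"
proof -
  have "(a, g a) \<in> hirsch (comp_dom A g) (g \<circ> g)"
    using assms by (auto simp: graph_on_def)
  then show "g a \<in> A" and "a = g (g (g a)) / g a"
    by (auto simp: hirsch_def comp_dom_def)
qed

lemma hirsch_comp_eq_graph_image:
  assumes H: "hirsch (comp_dom A g) (g \<circ> g) = graph_on A g"
  shows "g ` A = A"
proof
  show "g ` A \<subseteq> A"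
    using hirsch_comp_eq_graphD(1)[OF H] by auto
  show "A \<subseteq> g ` A"
  proof
    fix b assume "b \<in> A"
    then have "b \<in> comp_dom A g"
      using hirsch_comp_eq_graphD(1)[OF H] by (simp add: comp_dom_def)
    then have "(g (g b) / b, b) \<in> graph_on A g"
      using H by (auto simp: hirsch_def)
    then show "b \<in> g ` A"
      by (auto simp: graph_on_def)
  qed
qed

lemma hirsch_comp_eq_graph_recurrence:
  assumes H: "hirsch (comp_dom A g) (g \<circ> g) = graph_on A g"
    and pos: "\<forall>a\<in>A. a > 0" and "a \<in> A"
  shows "g (g (g a)) = a * g a"
proof -
  have "g a > 0"
    using hirsch_comp_eq_graphD(1)[OF H \<open>a \<in> A\<close>] pos by blast
  then show ?thesis
    using hirsch_comp_eq_graphD(2)[OF H \<open>a \<in> A\<close>] by (simp add: field_simps)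
qed

lemma singleton_graph_comp_iff:
  "card A = 1 \<and> graph_on (comp_dom A g) (g \<circ> g) = {(1, 1)} \<longleftrightarrow> A = {1} \<and> g 1 = 1"
proof
  assume R: "card A = 1 \<and> graph_on (comp_dom A g) (g \<circ> g) = {(1, 1)}"
  then obtain x where A: "A = {x}"
    by (auto simp: card_Suc_eq)
  have "(1, 1) \<in> graph_on (comp_dom A g) (g \<circ> g)"
    using R by simp
  then show "A = {1} \<and> g 1 = 1"
    using A by (auto simp: graph_on_def comp_dom_def)
qed (auto simp: graph_on_def comp_dom_def)

theorem theorem11:
  fixes A :: "real set" and g :: "real \<Rightarrow> real"
  assumes "finite A" and "A \<noteq> {}" and "\<forall>a\<in>A. a > 0"
    and "\<forall>a\<in>A. g a \<ge> 0"
  shows "hirsch (comp_dom A g) (g \<circ> g) = graph_on A g \<longleftrightarrow>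
         (card A = 1 \<and> graph_on (comp_dom A g) (g \<circ> g) = {(1, 1)})"
  unfolding singleton_graph_comp_iff
proof
  assume H: "hirsch (comp_dom A g) (g \<circ> g) = graph_on A g"
  have image: "g ` A = A"
    using hirsch_comp_eq_graph_image[OF H] .
  have "ln (g (g (g a))) = ln a + ln (g a)" if "a \<in> A" for a
    using hirsch_comp_eq_graph_recurrence[OF H assms(3) that] image that assms(3)
    by (auto simp: ln_mult)
  then have "\<forall>a\<in>A. ln a = 0"
    using third_iterate_recurrence_imp_zero[OF assms(1) image] by blast
  then have "A = {1}"
    using assms(2,3) by auto
  then show "A = {1} \<and> g 1 = 1"
    using image by auto
next
  assume "A = {1} \<and> g 1 = 1"
  then show "hirsch (comp_dom A g) (g \<circ> g) = graph_on A g"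
    by (auto simp: hirsch_def graph_on_def comp_dom_def)
qed

end
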